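(* Let $X$ be a hereditarily Baire metric space, $Y$ a metric space and $f\colon X\to Y$. Then the following are equivalent: $f$ has the generalized Lebesgue property; $f$ is weakly separated; $f$ has the LTZ property; $f$ has (PCP); $f$ is Borel 1; $f$ is fragmentable. Moreover, if $X$ or $Y$ is separable, each of these is also equivalent to: $f$ has the Lebesgue property.
   Context: Let $X$ be a topological space, $(Y,d)$ a metric space and $f\colon X\to Y$. A neighborhood assignment is a family $\{V_x\}_{x\in X}$ of open subsets of $X$ with $x\in V_x$ for every $x$. A family of subsets of $X$ is discrete if every point of $X$ has a neighborhood meeting at most one member of the family; it is $\sigma$-discrete if it is a countable union of discrete families. The function $f$ is called: weakly separated if for every $\varepsilon>0$ there is a neighborhood assignment $\{V_x\}_{x\in X}$ such that for all $x,y\in X$, $(x,y)\in V_y\times V_x$ implies $d(f(x),f(y))<\varepsilon$; fragmentable if for every $\varepsilon>0$ and every nonempty closed $F\subseteq X$ there is an open $U$ with $U\cap F\neq\emptyset$ and $\operatorname{diam} f(U\cap F)<\varepsilon$; said to have the Lebesgue property if for every $\varepsilon>0$ there are closed sets $X_n$ ($n\in\mathbb N$) with $X=\bigcup_n X_n$ and $\operatorname{diam} f(X_n)\le\varepsilon$ for all $n$; said to have the generalized Lebesgue property if for every $\varepsilon>0$ there is a $\sigma$-discrete family $\mathcal A_\varepsilon$ of closed subsets of $X$ with $X=\bigcup\mathcal A_\varepsilon$ and $\operatorname{diam} f(A)\le\varepsilon$ for all $A\in\mathcal A_\varepsilon$; said to have (PCP) if for every nonempty closed $F\subseteq X$ the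 restriction $f|_F$ has a point of continuity; Borel 1 if $f^{-1}(V)$ is an $F_\sigma$ set in $X$ for every open $V\subseteq Y$. A space is Baire if every nonempty open subset of it is nonmeager in it; it is hereditarily Baire if every nonempty closed subspace is a Baire space. When $X$ carries a metric $\varrho$, $f$ has the LTZ property if for every $\varepsilon>0$ there is $\delta_\varepsilon\colon X\to(0,\infty)$ such that for all $x,y\in X$, $\varrho(x,y)<\min\{\delta_\varepsilon(x),\delta_\varepsilon(y)\}$ implies $d(f(x),f(y))<\varepsilon$. *)

theory Defs
  imports "HOL-Analysis.Analysis"
begin

definition nowhere_dense_in :: "'a::topological_space set \<Rightarrow> 'a set \<Rightarrow> bool" where
  "nowhere_dense_in F N \<longleftrightarrow> N \<subseteq> F \<and>
     (\<forall>U. openin (top_of_set F) U \<and> U \<subseteq> (top_of_set F) closure_of N \<longrightarrow> U = {})"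

definition meager_in :: "'a::topological_space set \<Rightarrow> 'a set \<Rightarrow> bool" where
  "meager_in F S \<longleftrightarrow> (\<exists>N::nat \<Rightarrow> 'a set. (\<forall>n. nowhere_dense_in F (N n)) \<and> S \<subseteq> \<Union>(range N))"

definition baire_subspace :: "'a::topological_space set \<Rightarrow> bool" where
  "baire_subspace F \<longleftrightarrow> (\<forall>U. openin (top_of_set F) U \<and> U \<noteq> {} \<longrightarrow> \<not> meager_in F U)"

definition hereditarily_baire :: "'a::topological_space itself \<Rightarrow> bool" where
  "hereditarily_baire _ \<longleftrightarrow> (\<forall>F::'a set. closed F \<and> F \<noteq> {} \<longrightarrow> baire_subspace F)"

definition discrete_family :: "'a::topological_space set set \<Rightarrow> bool" where
  "discrete_family \<A> \<longleftrightarrow> (\<forall>x. \<exists>U. open U \<and> x \<in> U \<and>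
      (\<forall>A\<in>\<A>. \<forall>B\<in>\<A>. A \<inter> U \<noteq> {} \<and> B \<inter> U \<noteq> {} \<longrightarrow> A = B))"

definition sigma_discrete :: "'a::topological_space set set \<Rightarrow> bool" where
  "sigma_discrete \<A> \<longleftrightarrow> (\<exists>\<D>::nat \<Rightarrow> 'a set set. (\<forall>n. discrete_family (\<D> n)) \<and> \<A> = \<Union>(range \<D>))"

definition weakly_separated :: "('a::topological_space \<Rightarrow> 'b::metric_space) \<Rightarrow> bool" where
  "weakly_separated f \<longleftrightarrow> (\<forall>\<epsilon>>0. \<exists>V::'a \<Rightarrow> 'a set. (\<forall>x. open (V x) \<and> x \<in> V x) \<and>
      (\<forall>x y. x \<in> V y \<and> y \<in> V x \<longrightarrow> dist (f x) (f y) < \<epsilon>))"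

definition fragmentable :: "('a::topological_space \<Rightarrow> 'b::metric_space) \<Rightarrow> bool" where
  "fragmentable f \<longleftrightarrow> (\<forall>\<epsilon>>0. \<forall>F. closed F \<and> F \<noteq> {} \<longrightarrow>
      (\<exists>U. open U \<and> U \<inter> F \<noteq> {} \<and> bounded (f ` (U \<inter> F)) \<and> diameter (f ` (U \<inter> F)) < \<epsilon>))"

definition lebesgue_property :: "('a::topological_space \<Rightarrow> 'b::metric_space) \<Rightarrow> bool" where
  "lebesgue_property f \<longleftrightarrow> (\<forall>\<epsilon>>0. \<exists>X::nat \<Rightarrow> 'a set. (\<forall>n. closed (X n)) \<and> \<Union>(range X) = UNIV \<and>
      (\<forall>n. bounded (f ` X n) \<and> diameter (f ` X n) \<le> \<epsilon>))"

definition gen_lebesgue_property :: "('a::topological_space \<Rightarrow> 'b::metric_space) \<Rightarrow> bool" where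
  "gen_lebesgue_property f \<longleftrightarrow> (\<forall>\<epsilon>>0. \<exists>\<A>::'a set set. sigma_discrete \<A> \<and> (\<forall>A\<in>\<A>. closed A) \<and>
      \<Union>\<A> = UNIV \<and> (\<forall>A\<in>\<A>. bounded (f ` A) \<and> diameter (f ` A) \<le> \<epsilon>))"

definition PCP :: "('a::metric_space \<Rightarrow> 'b::topological_space) \<Rightarrow> bool" where
  "PCP f \<longleftrightarrow> (\<forall>F. closed F \<and> F \<noteq> {} \<longrightarrow> (\<exists>x\<in>F. continuous (at x within F) f))"

definition borel1 :: "('a::topological_space \<Rightarrow> 'b::topological_space) \<Rightarrow> bool" where
  "borel1 f \<longleftrightarrow> (\<forall>V. open V \<longrightarrow> fsigma (f -` V))"

definition LTZ :: "('a::metric_space \<Rightarrow> 'b::metric_space) \<Rightarrow> bool" where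
  "LTZ f \<longleftrightarrow> (\<forall>\<epsilon>>0. \<exists>\<delta>::'a \<Rightarrow> real. (\<forall>x. \<delta> x > 0) \<and>
      (\<forall>x y. dist x y < min (\<delta> x) (\<delta> y) \<longrightarrow> dist (f x) (f y) < \<epsilon>))"

end

(* Weak separation is the LTZ property read through balls.  A sigma-discrete closed cover on
   which f varies by at most epsilon gives weak separation: let V x avoid all levels of the cover
   below the first one containing x, so that mutually close points share a member.  Conversely,
   the LTZ radii combined with Stone's sigma-discrete refinement of covers by small balls produce
   such covers, and such covers make preimages of open sets F-sigma.  In a hereditarily Baire space
   the Baire category theorem turns Borel 1 into fragmentability and fragmentability into (PCP);
   fragmentability gives back weak separation through a transfinite exhaustion of the space by
   open sets, each stage adding every open set on which f varies little outside the previous one.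
   Finally, discrete families in a separable metric space are countable, and if Y is separable
   the preimages of small balls around a countable dense set form a countable F-sigma cover. *)

theory Submission
  imports Defs "HOL-Library.Bourbaki_Witt_Fixpoint"
begin

section \<open>Pointwise forms of the oscillation conditions\<close>

lemma bounded_diameter_le_iff:
  fixes S :: "'a::metric_space set"
  assumes "0 \<le> d"
  shows "bounded S \<and> diameter S \<le> d \<longleftrightarrow> (\<forall>x\<in>S. \<forall>y\<in>S. dist x y \<le> d)"
proof
  assume "bounded S \<and> diameter S \<le> d"
  then show "\<forall>x\<in>S. \<forall>y\<in>S. dist x y \<le> d"
    using diameter_bounded_bound order_trans by blast
next
  assume S: "\<forall>x\<in>S. \<forall>y\<in>S. dist x y \<le> d"
  show "bounded S \<and> diameter S \<le> d"
  proof (cases "S = {}")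
    case False
    then obtain s where "s \<in> S" by blast
    with S have "S \<subseteq> cball s d" by (auto simp: subset_iff)
    then have "bounded S" using bounded_cball bounded_subset by blast
    moreover have "diameter S \<le> d"
      unfolding diameter_def using False S by (auto intro!: cSUP_least)
    ultimately show ?thesis ..
  qed (use assms in simp)
qed

lemma bounded_diameter_image_le_iff:
  fixes f :: "'a \<Rightarrow> 'b::metric_space"
  assumes "0 \<le> d"
  shows "bounded (f ` A) \<and> diameter (f ` A) \<le> d \<longleftrightarrow> (\<forall>x\<in>A. \<forall>y\<in>A. dist (f x) (f y) \<le> d)"
  using bounded_diameter_le_iff[OF assms, of "f ` A"] by simp

lemma ex_range_iff_countable:
  assumes "\<And>A. P A \<Longrightarrow> A \<noteq> {}"
  shows "(\<exists>X::nat \<Rightarrow> 'a. P (range X)) \<longleftrightarrow> (\<exists>A. countable A \<and> P A)"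
proof
  assume "\<exists>A. countable A \<and> P A"
  then obtain A where "countable A" "P A" by blast
  then have "range (from_nat_into A) = A" using assms by (simp add: range_from_nat_into)
  with \<open>P A\<close> show "\<exists>X::nat \<Rightarrow> 'a. P (range X)" by (intro exI[of _ "from_nat_into A"]) simp
next
  assume "\<exists>X::nat \<Rightarrow> 'a. P (range X)"
  then obtain X :: "nat \<Rightarrow> 'a" where "P (range X)" ..
  then show "\<exists>A. countable A \<and> P A" by (intro exI[of _ "range X"]) simp
qed

lemma gen_lebesgue_property_iff_dist:
  fixes f :: "'a::topological_space \<Rightarrow> 'b::metric_space"
  shows "gen_lebesgue_property f \<longleftrightarrow> (\<forall>\<epsilon>>0. \<exists>\<A>. sigma_discrete \<A> \<and> (\<forall>A\<in>\<A>. closed A) \<and> \<Union>\<A> = UNIV \<and>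
      (\<forall>A\<in>\<A>. \<forall>x\<in>A. \<forall>y\<in>A. dist (f x) (f y) \<le> \<epsilon>))"
  unfolding gen_lebesgue_property_def
  by (intro all_cong1 imp_cong refl ex_cong1 conj_cong ball_cong bounded_diameter_image_le_iff) simp

lemma gen_lebesgue_propertyE:
  fixes f :: "'a::topological_space \<Rightarrow> 'b::metric_space"
  assumes "gen_lebesgue_property f" and "\<epsilon> > 0"
  obtains \<A> where "sigma_discrete \<A>" "\<forall>A\<in>\<A>. closed A" "\<Union>\<A> = UNIV"
    "\<forall>A\<in>\<A>. \<forall>x\<in>A. \<forall>y\<in>A. dist (f x) (f y) \<le> \<epsilon>"
  using assms(1)[unfolded gen_lebesgue_property_iff_dist, rule_format, OF assms(2)] that by auto

lemma lebesgue_property_iff_countable_dist: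
  fixes f :: "'a::topological_space \<Rightarrow> 'b::metric_space"
  shows "lebesgue_property f \<longleftrightarrow> (\<forall>\<epsilon>>0. \<exists>\<A>. countable \<A> \<and> (\<forall>A\<in>\<A>. closed A) \<and> \<Union>\<A> = UNIV \<and>
      (\<forall>A\<in>\<A>. \<forall>x\<in>A. \<forall>y\<in>A. dist (f x) (f y) \<le> \<epsilon>))"
  unfolding lebesgue_property_def
proof (intro all_cong1 imp_cong refl)
  fix \<epsilon> :: real assume "\<epsilon> > 0"
  then show "(\<exists>X::nat \<Rightarrow> 'a set. (\<forall>n. closed (X n)) \<and> \<Union>(range X) = UNIV \<and>
          (\<forall>n. bounded (f ` X n) \<and> diameter (f ` X n) \<le> \<epsilon>))
      \<longleftrightarrow> (\<exists>\<A>. countable \<A> \<and> (\<forall>A\<in>\<A>. closed A) \<and> \<Union>\<A> = UNIV \<and>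
          (\<forall>A\<in>\<A>. \<forall>x\<in>A. \<forall>y\<in>A. dist (f x) (f y) \<le> \<epsilon>))"
    by (subst ex_range_iff_countable[symmetric]) (auto simp: bounded_diameter_image_le_iff)
qed

lemma fragmentable_iff_dist:
  fixes f :: "'a::topological_space \<Rightarrow> 'b::metric_space"
  shows "fragmentable f \<longleftrightarrow> (\<forall>\<epsilon>>0. \<forall>F. closed F \<and> F \<noteq> {} \<longrightarrow>
      (\<exists>U. open U \<and> U \<inter> F \<noteq> {} \<and> (\<forall>x\<in>U \<inter> F. \<forall>y\<in>U \<inter> F. dist (f x) (f y) \<le> \<epsilon>)))"
  unfolding fragmentable_def
proof (intro iffI allI impI)
  fix \<epsilon> :: real and F :: "'a set"
  assume "\<forall>\<epsilon>>0. \<forall>F. closed F \<and> F \<noteq> {} \<longrightarrow>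
      (\<exists>U. open U \<and> U \<inter> F \<noteq> {} \<and> bounded (f ` (U \<inter> F)) \<and> diameter (f ` (U \<inter> F)) < \<epsilon>)"
    and "\<epsilon> > 0" "closed F \<and> F \<noteq> {}"
  then obtain U where "open U" "U \<inter> F \<noteq> {}" "bounded (f ` (U \<inter> F))" "diameter (f ` (U \<inter> F)) < \<epsilon>"
    by blast
  then show "\<exists>U. open U \<and> U \<inter> F \<noteq> {} \<and> (\<forall>x\<in>U \<inter> F. \<forall>y\<in>U \<inter> F. dist (f x) (f y) \<le> \<epsilon>)"
    by (meson diameter_bounded_bound imageI less_imp_le order_trans)
next
  fix \<epsilon> :: real and F :: "'a set"
  assume "\<forall>\<epsilon>>0. \<forall>F. closed F \<and> F \<noteq> {} \<longrightarrow>
      (\<exists>U. open U \<and> U \<inter> F \<noteq> {} \<and> (\<forall>x\<in>U \<inter> F. \<forall>y\<in>U \<inter> F. dist (f x) (f y) \<le> \<epsilon>))"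
    and "\<epsilon> > 0" "closed F \<and> F \<noteq> {}"
  then obtain U where "open U" "U \<inter> F \<noteq> {}" "\<forall>x\<in>U \<inter> F. \<forall>y\<in>U \<inter> F. dist (f x) (f y) \<le> \<epsilon>/2"
    by (meson half_gt_zero)
  with \<open>\<epsilon> > 0\<close> show "\<exists>U. open U \<and> U \<inter> F \<noteq> {} \<and> bounded (f ` (U \<inter> F)) \<and> diameter (f ` (U \<inter> F)) < \<epsilon>"
    using bounded_diameter_image_le_iff[of "\<epsilon>/2" f "U \<inter> F"] by (intro exI[of _ U]) auto
qed

section \<open>Discrete and sigma-discrete families\<close>

lemma discrete_familyE:
  assumes "discrete_family \<A>"
  obtains U where "open U" "x \<in> U" "\<forall>A\<in>\<A>. \<forall>B\<in>\<A>. A \<inter> U \<noteq> {} \<and> B \<inter> U \<noteq> {} \<longrightarrow> A = B"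
proof -
  have "\<exists>U. open U \<and> x \<in> U \<and> (\<forall>A\<in>\<A>. \<forall>B\<in>\<A>. A \<inter> U \<noteq> {} \<and> B \<inter> U \<noteq> {} \<longrightarrow> A = B)"
    using assms unfolding discrete_family_def by (rule spec)
  then show thesis using that by (elim exE conjE)
qed

lemma discrete_family_subset: "discrete_family \<A> \<Longrightarrow> \<B> \<subseteq> \<A> \<Longrightarrow> discrete_family \<B>"
  unfolding discrete_family_def by (meson subsetD)

lemma discrete_family_singleton: "discrete_family {A}"
  unfolding discrete_family_def by (intro allI exI[of _ UNIV]) simp

lemma discrete_family_image_subset:
  assumes "discrete_family \<A>" and "\<And>A. A \<in> \<A> \<Longrightarrow> h A \<subseteq> A"
  shows "discrete_family (h ` \<A>)"
  unfolding discrete_family_def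
proof
  fix x
  obtain U where "open U" "x \<in> U"
    and U: "\<forall>A\<in>\<A>. \<forall>B\<in>\<A>. A \<inter> U \<noteq> {} \<and> B \<inter> U \<noteq> {} \<longrightarrow> A = B"
    using assms(1) by (rule discrete_familyE)
  moreover have "\<forall>A\<in>h ` \<A>. \<forall>B\<in>h ` \<A>. A \<inter> U \<noteq> {} \<and> B \<inter> U \<noteq> {} \<longrightarrow> A = B"
  proof (intro ballI impI)
    fix A B assume "A \<in> h ` \<A>" "B \<in> h ` \<A>" and meet: "A \<inter> U \<noteq> {} \<and> B \<inter> U \<noteq> {}"
    then obtain A' B' where "A' \<in> \<A>" "B' \<in> \<A>" "A = h A'" "B = h B'" by blast
    with meet assms(2) have "A' \<inter> U \<noteq> {} \<and> B' \<inter> U \<noteq> {}" by blast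
    with U \<open>A' \<in> \<A>\<close> \<open>B' \<in> \<A>\<close> have "A' = B'" by blast
    with \<open>A = h A'\<close> \<open>B = h B'\<close> show "A = B" by simp
  qed
  ultimately show "\<exists>U. open U \<and> x \<in> U \<and> (\<forall>A\<in>h ` \<A>. \<forall>B\<in>h ` \<A>. A \<inter> U \<noteq> {} \<and> B \<inter> U \<noteq> {} \<longrightarrow> A = B)"
    by blast
qed

lemma discrete_family_closure:
  assumes "discrete_family \<A>"
  shows "discrete_family (closure ` \<A>)"
  unfolding discrete_family_def
proof
  fix x
  obtain U where "open U" "x \<in> U"
    and U: "\<forall>A\<in>\<A>. \<forall>B\<in>\<A>. A \<inter> U \<noteq> {} \<and> B \<inter> U \<noteq> {} \<longrightarrow> A = B"
    using assms by (rule discrete_familyE)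
  moreover have "\<forall>A\<in>closure ` \<A>. \<forall>B\<in>closure ` \<A>. A \<inter> U \<noteq> {} \<and> B \<inter> U \<noteq> {} \<longrightarrow> A = B"
    using U open_Int_closure_eq_empty[OF \<open>open U\<close>] by (auto simp: Int_commute)
  ultimately show "\<exists>U. open U \<and> x \<in> U \<and> (\<forall>A\<in>closure ` \<A>. \<forall>B\<in>closure ` \<A>. A \<inter> U \<noteq> {} \<and> B \<inter> U \<noteq> {} \<longrightarrow> A = B)"
    by blast
qed

lemma discrete_familyI_dist:
  fixes \<A> :: "'a::metric_space set set"
  assumes "0 < \<delta>"
    and "\<And>A B x y. A \<in> \<A> \<Longrightarrow> B \<in> \<A> \<Longrightarrow> x \<in> A \<Longrightarrow> y \<in> B \<Longrightarrow> dist x y < \<delta> \<Longrightarrow> A = B"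
  shows "discrete_family \<A>"
  unfolding discrete_family_def
proof
  fix z :: 'a
  have "A = B" if AB: "A \<in> \<A>" "B \<in> \<A>" and meet: "A \<inter> ball z (\<delta>/2) \<noteq> {}" "B \<inter> ball z (\<delta>/2) \<noteq> {}"
    for A B
  proof -
    obtain x y where "x \<in> A" "y \<in> B" "dist z x < \<delta>/2" "dist z y < \<delta>/2"
      using meet by auto
    moreover have "dist x y \<le> dist z x + dist z y"
      by (rule dist_triangle3)
    ultimately show "A = B" using AB assms(2) by fastforce
  qed
  then show "\<exists>U. open U \<and> z \<in> U \<and> (\<forall>A\<in>\<A>. \<forall>B\<in>\<A>. A \<inter> U \<noteq> {} \<and> B \<inter> U \<noteq> {} \<longrightarrow> A = B)"
    using assms(1) by (intro exI[of _ "ball z (\<delta>/2)"]) auto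
qed

lemma finite_if_subsingleton:
  assumes "\<And>a b. a \<in> S \<Longrightarrow> b \<in> S \<Longrightarrow> a = b"
  shows "finite S"
proof (cases "S = {}")
  case False
  then obtain a where "a \<in> S" by blast
  with assms have "S \<subseteq> {a}" by blast
  then show ?thesis by (rule finite_subset) simp
qed simp

lemma locally_finite_in_discrete_family:
  assumes "discrete_family \<A>"
  shows "locally_finite_in euclidean \<A>"
  unfolding locally_finite_in_def
proof (intro conjI ballI)
  fix x
  obtain U where "open U" "x \<in> U"
    and U: "\<forall>A\<in>\<A>. \<forall>B\<in>\<A>. A \<inter> U \<noteq> {} \<and> B \<inter> U \<noteq> {} \<longrightarrow> A = B"
    using assms by (rule discrete_familyE)
  have "finite {A \<in> \<A>. A \<inter> U \<noteq> {}}"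
    using U by (intro finite_if_subsingleton) blast
  with \<open>open U\<close> \<open>x \<in> U\<close> show "\<exists>V. openin euclidean V \<and> x \<in> V \<and> finite {A \<in> \<A>. A \<inter> V \<noteq> {}}"
    by auto
qed simp

lemma closed_Union_discrete_family:
  assumes "discrete_family \<A>" and "\<And>A. A \<in> \<A> \<Longrightarrow> closed A"
  shows "closed (\<Union>\<A>)"
  using closedin_locally_finite_Union[OF _ locally_finite_in_discrete_family[OF assms(1)]] assms(2)
  by simp

lemma countable_discrete_family_if_separable:
  fixes \<A> :: "'a::metric_space set set"
  assumes "separable_space (euclidean :: 'a topology)" and "discrete_family \<A>"
  shows "countable (\<A> - {{}})"
proof -
  obtain C :: "'a set" where "countable C" and dense: "closure C = UNIV"
    using assms(1) unfolding separable_space_def by auto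
  define owner where "owner c n =
      {A \<in> \<A>. A \<inter> ball c (inverse (Suc n)) \<noteq> {} \<and> (\<forall>B\<in>\<A>. B \<inter> ball c (inverse (Suc n)) \<noteq> {} \<longrightarrow> B = A)}"
    for c n
  have "\<A> - {{}} \<subseteq> (\<Union>(c, n)\<in>C \<times> UNIV. owner c n)"
  proof
    fix A assume "A \<in> \<A> - {{}}"
    then obtain a where "A \<in> \<A>" "a \<in> A" by blast
    obtain U where "open U" "a \<in> U" and U: "\<forall>A\<in>\<A>. \<forall>B\<in>\<A>. A \<inter> U \<noteq> {} \<and> B \<inter> U \<noteq> {} \<longrightarrow> A = B"
      using assms(2) by (rule discrete_familyE)
    obtain r where "r > 0" "ball a r \<subseteq> U"
      using \<open>open U\<close> \<open>a \<in> U\<close> by (rule openE)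
    obtain n where n: "inverse (Suc n) < r / 2"
      using reals_Archimedean[of "r / 2"] \<open>r > 0\<close> by auto
    obtain c where "c \<in> C" and c: "dist c a < inverse (Suc n)"
      using dense closure_approachable[of a C] inverse_Suc by (metis UNIV_I of_nat_Suc)
    have "ball c (inverse (Suc n)) \<subseteq> U"
    proof
      fix z assume "z \<in> ball c (inverse (Suc n))"
      then have "dist a z < r" using c n dist_triangle3[of a z c] by (simp add: dist_commute)
      then show "z \<in> U" using \<open>ball a r \<subseteq> U\<close> by auto
    qed
    moreover have "a \<in> ball c (inverse (Suc n))" using c by simp
    ultimately have "A \<in> owner c n"
      using U \<open>A \<in> \<A>\<close> \<open>a \<in> A\<close> unfolding owner_def by blast
    with \<open>c \<in> C\<close> show "A \<in> (\<Union>(c, n)\<in>C \<times> UNIV. owner c n)" by blast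
  qed
  moreover have "countable (owner c n)" for c n
    by (rule countable_finite, rule finite_if_subsingleton) (auto simp: owner_def)
  then have "countable (\<Union>(c, n)\<in>C \<times> UNIV. owner c n)"
    using \<open>countable C\<close> by (intro countable_UN) (simp_all add: split_beta)
  ultimately show ?thesis by (rule countable_subset)
qed

lemma sigma_discrete_iff_countable:
  "sigma_discrete \<A> \<longleftrightarrow> (\<exists>\<F>. countable \<F> \<and> (\<forall>\<D>\<in>\<F>. discrete_family \<D>) \<and> \<A> = \<Union>\<F>)"
  unfolding sigma_discrete_def
proof (cases "\<A> = {}")
  case True
  have "discrete_family {}"
    using discrete_family_subset discrete_family_singleton by blast
  with True show "(\<exists>\<D>::nat \<Rightarrow> _. (\<forall>n. discrete_family (\<D> n)) \<and> \<A> = \<Union>(range \<D>)) \<longleftrightarrow>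
      (\<exists>\<F>. countable \<F> \<and> (\<forall>\<D>\<in>\<F>. discrete_family \<D>) \<and> \<A> = \<Union>\<F>)"
    by (intro iffI exI[of _ "{}"] exI[of _ "\<lambda>_. {}"]) auto
next
  case False
  then show "(\<exists>\<D>::nat \<Rightarrow> _. (\<forall>n. discrete_family (\<D> n)) \<and> \<A> = \<Union>(range \<D>)) \<longleftrightarrow>
      (\<exists>\<F>. countable \<F> \<and> (\<forall>\<D>\<in>\<F>. discrete_family \<D>) \<and> \<A> = \<Union>\<F>)"
    by (subst ex_range_iff_countable[where P = "\<lambda>\<F>. (\<forall>\<D>\<in>\<F>. discrete_family \<D>) \<and> \<A> = \<Union>\<F>", symmetric])
      auto
qed

lemma sigma_discrete_subset:
  assumes "sigma_discrete \<A>" and "\<B> \<subseteq> \<A>"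
  shows "sigma_discrete \<B>"
proof -
  obtain \<D> :: "nat \<Rightarrow> _" where "\<And>n. discrete_family (\<D> n)" "\<A> = \<Union>(range \<D>)"
    using assms(1) unfolding sigma_discrete_def by blast
  then have "(\<forall>n. discrete_family (\<D> n \<inter> \<B>)) \<and> \<B> = \<Union>(range (\<lambda>n. \<D> n \<inter> \<B>))"
    using assms(2) discrete_family_subset by blast
  then show ?thesis unfolding sigma_discrete_def by (intro exI[of _ "\<lambda>n. \<D> n \<inter> \<B>"])
qed

lemma countable_imp_sigma_discrete:
  assumes "countable \<A>"
  shows "sigma_discrete \<A>"
  using assms discrete_family_singleton
  unfolding sigma_discrete_iff_countable by (intro exI[of _ "(\<lambda>A. {A}) ` \<A>"]) auto

lemma sigma_discrete_closed_cover_neighbourhoods: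
  fixes \<A> :: "'a::topological_space set set"
  assumes "sigma_discrete \<A>" "\<forall>A\<in>\<A>. closed A" "\<Union>\<A> = UNIV"
  obtains V where "\<forall>x. open (V x) \<and> x \<in> V x" "\<forall>x y. x \<in> V y \<and> y \<in> V x \<longrightarrow> (\<exists>A\<in>\<A>. x \<in> A \<and> y \<in> A)"
proof -
  obtain D :: "nat \<Rightarrow> 'a set set" where disc: "\<And>n. discrete_family (D n)" and \<A>: "\<A> = \<Union>(range D)"
    using assms(1) unfolding sigma_discrete_def by blast
  define level where "level x = (LEAST n. x \<in> \<Union>(D n))" for x
  define below where "below n = (\<Union>k<n. \<Union>(D k))" for n
  have level: "x \<in> \<Union>(D (level x))" for x
    unfolding level_def by (rule LeastI_ex) (use assms(3) \<A> in blast)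
  have below_level: "x \<in> below n \<longleftrightarrow> level x < n" for x n
  proof
    assume "x \<in> below n"
    then obtain k where "k < n" "x \<in> \<Union>(D k)" unfolding below_def by blast
    then have "level x \<le> k" unfolding level_def by (simp add: Least_le)
    with \<open>k < n\<close> show "level x < n" by simp
  next
    assume "level x < n"
    with level show "x \<in> below n" unfolding below_def by blast
  qed
  have "closed (below n)" for n
    unfolding below_def using closed_Union_discrete_family[OF disc] assms(2) \<A> by (simp add: closed_UN)
  have "\<forall>x. \<exists>U. open U \<and> x \<in> U \<and> (\<forall>A\<in>D (level x). \<forall>B\<in>D (level x). A \<inter> U \<noteq> {} \<and> B \<inter> U \<noteq> {} \<longrightarrow> A = B)"
    using disc unfolding discrete_family_def by blast
  then obtain U where "\<And>x. open (U x)" "\<And>x. x \<in> U x"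
    and U: "\<And>x. \<forall>A\<in>D (level x). \<forall>B\<in>D (level x). A \<inter> U x \<noteq> {} \<and> B \<inter> U x \<noteq> {} \<longrightarrow> A = B"
    by metis
  show thesis
  proof (rule that[of "\<lambda>x. U x - below (level x)"]; intro allI impI conjI)
    fix x
    show "open (U x - below (level x))" using \<open>open (U x)\<close> \<open>closed (below (level x))\<close> by blast
    show "x \<in> U x - below (level x)" using \<open>x \<in> U x\<close> below_level by simp
  next
    fix x y assume "x \<in> U y - below (level y) \<and> y \<in> U x - below (level x)"
    then have "y \<in> U x" "level x = level y" by (auto simp: below_level)
    obtain A where "A \<in> D (level x)" "x \<in> A" using level[of x] by blast
    moreover obtain B where "B \<in> D (level x)" "y \<in> B" using level[of y] \<open>level x = level y\<close> by auto
    ultimately have "A = B" using \<open>x \<in> U x\<close> \<open>y \<in> U x\<close> U[of x] by blast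
    with \<open>A \<in> D (level x)\<close> \<open>x \<in> A\<close> \<open>y \<in> B\<close> show "\<exists>A\<in>\<A>. x \<in> A \<and> y \<in> A" unfolding \<A> by blast
  qed
qed

lemma ex_wf_total: "\<exists>R::'a rel. wf R \<and> (\<forall>a b. a \<noteq> b \<longrightarrow> (a, b) \<in> R \<or> (b, a) \<in> R)"
proof -
  from well_ordering obtain W :: "'a rel" where W: "Well_order W \<and> Field W = UNIV" ..
  then have "wf (W - Id)" "\<forall>a b. a \<noteq> b \<longrightarrow> (a, b) \<in> W - Id \<or> (b, a) \<in> W - Id"
    unfolding well_order_on_def linear_order_on_def total_on_def by auto
  then show ?thesis by blast
qed

lemma sigma_discrete_refinement_of_balls:
  fixes r :: real
  assumes "0 < r"
  obtains \<D> :: "nat \<Rightarrow> 'a::metric_space set set"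
  where "\<And>n. discrete_family (\<D> n)" "\<And>n D. D \<in> \<D> n \<Longrightarrow> \<exists>c. D \<subseteq> ball c r"
    "\<And>x. \<exists>n. \<exists>D\<in>\<D> n. x \<in> D"
proof -
  from ex_wf_total obtain R :: "'a rel" where "wf R \<and> (\<forall>a b. a \<noteq> b \<longrightarrow> (a, b) \<in> R \<or> (b, a) \<in> R)" ..
  then have "wf R" and total: "\<And>a b. a \<noteq> b \<Longrightarrow> (a, b) \<in> R \<or> (b, a) \<in> R" by auto
  have "\<exists>c\<in>ball x r. \<forall>a. (a, c) \<in> R \<longrightarrow> a \<notin> ball x r" for x
    by (rule wf_eq_minimal[THEN iffD1, OF \<open>wf R\<close>, rule_format, of x "ball x r"]) (simp add: assms)
  then obtain c where c: "\<And>x. c x \<in> ball x r" and c_min: "\<And>x a. (a, c x) \<in> R \<Longrightarrow> a \<notin> ball x r"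
    by metis
  define cell where "cell n a = {x. c x = a \<and> ball x (inverse (Suc n)) \<subseteq> ball a r}" for n a
  \<comment> \<open>A point of the \<open>b\<close>-cell that close to the \<open>a\<close>-cell lies in \<open>ball a r\<close>, so the
      \<open>R\<close>-earlier \<open>a\<close> would have been chosen as its centre.\<close>
  have apart: "\<not> dist x y < inverse (Suc n)" if "x \<in> cell n a" "y \<in> cell n b" "(a, b) \<in> R" for x y n a b
  proof
    assume "dist x y < inverse (Suc n)"
    then have "y \<in> ball a r" using that(1) by (auto simp: cell_def)
    moreover have "a \<notin> ball y r" using c_min[of a y] that(2,3) by (simp add: cell_def)
    ultimately show False by (simp add: dist_commute)
  qed
  have disc: "discrete_family (range (cell n))" for n
  proof (rule discrete_familyI_dist)
    fix A B x y
    assume "A \<in> range (cell n)" "B \<in> range (cell n)" "x \<in> A" "y \<in> B" and near: "dist x y < inverse (Suc n)"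
    then obtain a b where "A = cell n a" "B = cell n b" "x \<in> cell n a" "y \<in> cell n b" by blast
    moreover have "a = b"
    proof (rule ccontr)
      assume "a \<noteq> b"
      then have "(a, b) \<in> R \<or> (b, a) \<in> R" by (rule total)
      then show False
        using apart[of x n a y b] apart[of y n b x a] \<open>x \<in> cell n a\<close> \<open>y \<in> cell n b\<close> near
        by (auto simp: dist_commute)
    qed
    ultimately show "A = B" by simp
  qed simp
  have small: "cell n a \<subseteq> ball a r" for n a
  proof
    fix x assume "x \<in> cell n a"
    then have "ball x (inverse (Suc n)) \<subseteq> ball a r" by (simp add: cell_def)
    moreover have "x \<in> ball x (inverse (Suc n))" by simp
    ultimately show "x \<in> ball a r" by blast
  qed
  have cover: "\<exists>n. x \<in> cell n (c x)" for x
  proof -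
    obtain n where n: "inverse (Suc n) < r - dist x (c x)"
      using reals_Archimedean[of "r - dist x (c x)"] c[of x] by (auto simp: dist_commute)
    have "ball x (inverse (Suc n)) \<subseteq> ball (c x) r"
    proof
      fix z assume "z \<in> ball x (inverse (Suc n))"
      moreover have "dist (c x) z \<le> dist (c x) x + dist x z" by (rule dist_triangle)
      ultimately show "z \<in> ball (c x) r" using n by (simp add: dist_commute)
    qed
    then show ?thesis unfolding cell_def by auto
  qed
  show thesis
  proof (rule that[of "\<lambda>n. range (cell n)"])
    show "discrete_family (range (cell n))" for n by (rule disc)
    show "\<exists>c. D \<subseteq> ball c r" if "D \<in> range (cell n)" for n D using that small by blast
    show "\<exists>n. \<exists>D\<in>range (cell n). x \<in> D" for x using cover by blast
  qed
qed

section \<open>F-sigma sets and the Baire property\<close>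

lemma fsigma_iff_countable_union_of: "fsigma S \<longleftrightarrow> (countable union_of closed) S"
  by (auto simp: countable_union_of_explicit fsigma.simps)

lemma fsigma_UN:
  assumes "countable I" and "\<And>i. i \<in> I \<Longrightarrow> fsigma (S i)"
  shows "fsigma (\<Union>i\<in>I. S i)"
  using assms unfolding fsigma_iff_countable_union_of by (rule countable_union_of_UN)

lemma fsigma_Union_sigma_discrete:
  assumes "sigma_discrete \<A>" and "\<And>A. A \<in> \<A> \<Longrightarrow> closed A"
  shows "fsigma (\<Union>\<A>)"
proof -
  obtain \<D> :: "nat \<Rightarrow> _" where \<D>: "\<And>n. discrete_family (\<D> n)" "\<A> = \<Union>(range \<D>)"
    using assms(1) unfolding sigma_discrete_def by blast
  then have "\<Union>\<A> = (\<Union>n. \<Union>(\<D> n))" by auto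
  moreover have "closed (\<Union>(\<D> n))" for n
    using closed_Union_discrete_family[OF \<D>(1)] assms(2) \<D>(2) by blast
  ultimately show ?thesis by (simp add: fsigma.intros)
qed

lemma hereditarily_baire_closed_cover:
  fixes M :: "'a::topological_space set"
  assumes "hereditarily_baire TYPE('a)" and "closed M" "M \<noteq> {}"
    and "countable \<N>" "\<And>N. N \<in> \<N> \<Longrightarrow> closed N" "M \<subseteq> \<Union>\<N>"
  obtains N G where "N \<in> \<N>" "open G" "G \<inter> M \<noteq> {}" "G \<inter> M \<subseteq> N"
proof -
  have "\<exists>N\<in>\<N>. \<exists>G. open G \<and> G \<inter> M \<noteq> {} \<and> G \<inter> M \<subseteq> N"
  proof (rule ccontr)
    assume none: "\<not> ?thesis"
    have "\<N> \<noteq> {}" using assms(3,6) by blast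
    define P where "P n = M \<inter> from_nat_into \<N> n" for n
    have "nowhere_dense_in M (P n)" for n
      unfolding nowhere_dense_in_def
    proof (intro conjI allI impI)
      show "P n \<subseteq> M" by (simp add: P_def)
      fix U assume U: "openin (top_of_set M) U \<and> U \<subseteq> top_of_set M closure_of P n"
      have "closedin (top_of_set M) (P n)"
        unfolding P_def by (intro closedin_closed_Int assms(5) from_nat_into \<open>\<N> \<noteq> {}\<close>)
      then have "top_of_set M closure_of P n = P n" by (simp add: closure_of_eq)
      with U have "U \<subseteq> P n" by simp
      moreover obtain G where "open G" "U = M \<inter> G"
        using U by (auto simp: openin_open)
      ultimately show "U = {}"
        using none from_nat_into[OF \<open>\<N> \<noteq> {}\<close>, of n] unfolding P_def by blast
    qed
    moreover have "M \<subseteq> \<Union>(range P)"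
      using assms(6) from_nat_into_surj[OF assms(4)] unfolding P_def by fastforce
    ultimately have "meager_in M M"
      unfolding meager_in_def by blast
    moreover have "baire_subspace M"
      using assms(1-3) unfolding hereditarily_baire_def by blast
    ultimately show False
      using assms(3) unfolding baire_subspace_def by auto
  qed
  with that show thesis by blast
qed

lemma hereditarily_baire_fsigma_cover:
  fixes M :: "'a::topological_space set"
  assumes "hereditarily_baire TYPE('a)" and "closed M" "M \<noteq> {}"
    and "countable \<S>" "\<And>S. S \<in> \<S> \<Longrightarrow> fsigma S" "M \<subseteq> \<Union>\<S>"
  obtains S G where "S \<in> \<S>" "open G" "G \<inter> M \<noteq> {}" "G \<inter> M \<subseteq> S"
proof -
  define F :: "'a set \<Rightarrow> nat \<Rightarrow> 'a set"
    where "F S = (SOME F. (\<forall>n. closed (F n)) \<and> S = \<Union>(range F))" for S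
  have "(\<forall>n. closed (F S n)) \<and> S = \<Union>(range (F S))" if "S \<in> \<S>" for S
  proof -
    have "\<exists>F::nat \<Rightarrow> 'a set. (\<forall>n. closed (F n)) \<and> S = \<Union>(range F)"
      using assms(5)[OF that] by (auto simp: fsigma.simps)
    then show ?thesis unfolding F_def by (rule someI_ex)
  qed
  then have F: "\<And>S n. S \<in> \<S> \<Longrightarrow> closed (F S n)" "\<And>S. S \<in> \<S> \<Longrightarrow> S = \<Union>(range (F S))"
    by simp_all
  define \<N> where "\<N> = (\<lambda>(S, n). F S n) ` (\<S> \<times> UNIV)"
  have "countable \<N>" unfolding \<N>_def using assms(4) by simp
  moreover have "\<And>N. N \<in> \<N> \<Longrightarrow> closed N" unfolding \<N>_def using F(1) by auto
  moreover have "M \<subseteq> \<Union>\<N>"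
  proof
    fix x assume "x \<in> M"
    then obtain S where "S \<in> \<S>" "x \<in> S" using assms(6) by blast
    then obtain n where "x \<in> F S n" using F(2) by blast
    with \<open>S \<in> \<S>\<close> show "x \<in> \<Union>\<N>" unfolding \<N>_def by blast
  qed
  ultimately obtain N G where "N \<in> \<N>" "open G" "G \<inter> M \<noteq> {}" "G \<inter> M \<subseteq> N"
    by (rule hereditarily_baire_closed_cover[OF assms(1-3)])
  from \<open>N \<in> \<N>\<close> obtain S n where "S \<in> \<S>" "N = F S n" unfolding \<N>_def by auto
  with F(2) \<open>G \<inter> M \<subseteq> N\<close> have "G \<inter> M \<subseteq> S" by blast
  with \<open>S \<in> \<S>\<close> \<open>open G\<close> \<open>G \<inter> M \<noteq> {}\<close> show thesis by (rule that)
qed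

section \<open>Transfinite exhaustion\<close>

lemma (in bourbaki_witt_fixpoint) iterates_above_le_or_step_le:
  assumes "x \<in> iterates_above a" "y \<in> iterates_above a" "a \<in> Field leq"
  shows "(y, x) \<in> leq \<or> (f x, y) \<in> leq"
  using iterates_above_triangle[OF assms]
proof
  assume "x \<in> iterates_above y"
  then show ?thesis using iterates_above_ge iterates_above_Field[OF assms(2,3)] by blast
next
  assume "y \<in> iterates_above x"
  moreover have "x \<in> Field leq" using iterates_above_Field[OF assms(1,3)] .
  ultimately have "y = x \<or> y \<in> iterates_above (f x)" by (rule iterates_above_successor)
  moreover have "f x \<in> Field leq" using increasing[OF \<open>x \<in> Field leq\<close>] by (rule FieldI2)
  ultimately show ?thesis using iterates_above_ge leq_refl \<open>x \<in> Field leq\<close> by blast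
qed

lemma extensive_exhaustion:
  fixes g :: "'a set \<Rightarrow> 'a set"
  assumes extensive: "\<And>A. A \<subseteq> g A"
    and P_step: "\<And>A. P A \<Longrightarrow> P (g A)" and P_Union: "\<And>\<W>. \<forall>W\<in>\<W>. P W \<Longrightarrow> P (\<Union>\<W>)"
    and grows: "\<And>A. P A \<Longrightarrow> A \<noteq> UNIV \<Longrightarrow> \<not> g A \<subseteq> A"
  obtains L where "\<forall>x. P (L x) \<and> x \<notin> L x \<and> x \<in> g (L x)"
    "\<forall>x y. x \<in> g (L y) \<and> y \<in> g (L x) \<longrightarrow> L x = L y"
proof -
  interpret bourbaki_witt_fixpoint Sup "{(A, B). A \<le> B}" g
    by (rule bourbaki_witt_fixpoint_complete_latticeI) (rule extensive)
  have Field: "Field {(A, B). A \<le> B} = (UNIV :: 'a set set)" by (auto simp: Field_def)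
  define T where "T = iterates_above {}"
  have P_T: "P W" if "W \<in> T" for W
    using that unfolding T_def
  proof induction
    case base
    then show ?case using P_Union[of "{}"] by simp
  qed (use P_step P_Union in \<open>auto simp: Chains_def\<close>)
  have tower: "V \<subseteq> W \<or> g W \<subseteq> V" if "V \<in> T" "W \<in> T" for V W
    using iterates_above_le_or_step_le[of W "{}" V] that Field unfolding T_def by auto
  define L where "L x = \<Union>{W \<in> T. x \<notin> W}" for x
  have L_T: "L x \<in> T" for x
  proof (cases "{W \<in> T. x \<notin> W} = {}")
    case True
    then have "L x = {}" unfolding L_def by (simp only: Union_empty)
    then show ?thesis unfolding T_def by (simp add: iterates_above.base)
  next
    case False
    have "{W \<in> T. x \<notin> W} \<in> Chains {(A, B). A \<le> B}"
      using chain_iterates_above Field unfolding T_def by (blast intro: in_Chains_subset)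
    with False show ?thesis unfolding L_def T_def by (auto intro: iterates_above.Sup)
  qed
  have not_L: "x \<notin> L x" for x unfolding L_def by blast
  have in_g_L: "x \<in> g (L x)" for x
  proof (rule ccontr)
    assume "x \<notin> g (L x)"
    moreover have "g (L x) \<in> T" using L_T unfolding T_def by (rule iterates_above.step)
    ultimately have "g (L x) \<subseteq> L x" unfolding L_def by blast
    with grows[OF P_T[OF L_T]] not_L show False by blast
  qed
  have L_eq: "L x = L y" if "x \<in> g (L y)" "y \<in> g (L x)" for x y
    using tower[OF L_T L_T, of x y] tower[OF L_T L_T, of y x] that not_L by blast
  show thesis
  proof (rule that)
    show "\<forall>x. P (L x) \<and> x \<notin> L x \<and> x \<in> g (L x)" using P_T[OF L_T] not_L in_g_L by blast
    show "\<forall>x y. x \<in> g (L y) \<and> y \<in> g (L x) \<longrightarrow> L x = L y" using L_eq by blast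
  qed
qed

lemma gen_lebesgue_property_imp_weakly_separated:
  fixes f :: "'a::topological_space \<Rightarrow> 'b::metric_space"
  assumes "gen_lebesgue_property f"
  shows "weakly_separated f"
  unfolding weakly_separated_def
proof (intro allI impI)
  fix \<epsilon> :: real assume "\<epsilon> > 0"
  obtain \<A> where \<A>: "sigma_discrete \<A>" "\<forall>A\<in>\<A>. closed A" "\<Union>\<A> = UNIV"
    and small: "\<forall>A\<in>\<A>. \<forall>x\<in>A. \<forall>y\<in>A. dist (f x) (f y) \<le> \<epsilon>/2"
    by (rule gen_lebesgue_propertyE[OF assms, of "\<epsilon>/2"]) (use \<open>\<epsilon> > 0\<close> in simp)
  obtain V where "\<forall>x. open (V x) \<and> x \<in> V x"
    and V: "\<forall>x y. x \<in> V y \<and> y \<in> V x \<longrightarrow> (\<exists>A\<in>\<A>. x \<in> A \<and> y \<in> A)"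
    using \<A> by (rule sigma_discrete_closed_cover_neighbourhoods)
  moreover have "\<forall>x y. x \<in> V y \<and> y \<in> V x \<longrightarrow> dist (f x) (f y) < \<epsilon>"
    using V small \<open>\<epsilon> > 0\<close> by fastforce
  ultimately show "\<exists>V. (\<forall>x. open (V x) \<and> x \<in> V x) \<and> (\<forall>x y. x \<in> V y \<and> y \<in> V x \<longrightarrow> dist (f x) (f y) < \<epsilon>)"
    by blast
qed

lemma weakly_separated_imp_LTZ:
  fixes f :: "'a::metric_space \<Rightarrow> 'b::metric_space"
  assumes "weakly_separated f"
  shows "LTZ f"
  unfolding LTZ_def
proof (intro allI impI)
  fix \<epsilon> :: real assume "\<epsilon> > 0"
  then obtain V where V: "\<forall>x. open (V x) \<and> x \<in> V x"
    and sep: "\<forall>x y. x \<in> V y \<and> y \<in> V x \<longrightarrow> dist (f x) (f y) < \<epsilon>"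
    using assms unfolding weakly_separated_def by blast
  have "\<forall>x. \<exists>d>0. ball x d \<subseteq> V x" using V open_contains_ball by blast
  then obtain \<delta> where \<delta>: "\<And>x. \<delta> x > 0" "\<And>x. ball x (\<delta> x) \<subseteq> V x" by metis
  have "dist (f x) (f y) < \<epsilon>" if "dist x y < min (\<delta> x) (\<delta> y)" for x y
  proof -
    have "y \<in> V x" using that \<delta>(2)[of x] by (auto simp: subset_iff)
    moreover have "x \<in> V y" using that \<delta>(2)[of y] by (auto simp: subset_iff dist_commute)
    ultimately show ?thesis using sep by blast
  qed
  with \<delta>(1) show "\<exists>\<delta>. (\<forall>x. \<delta> x > 0) \<and> (\<forall>x y. dist x y < min (\<delta> x) (\<delta> y) \<longrightarrow> dist (f x) (f y) < \<epsilon>)"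
    by blast
qed

lemma dist_image_closure_less:
  fixes f :: "'a::metric_space \<Rightarrow> 'b::metric_space"
  assumes \<delta>_pos: "\<forall>x. \<delta> x > 0" and \<delta>: "\<forall>x y. dist x y < min (\<delta> x) (\<delta> y) \<longrightarrow> dist (f x) (f y) < \<eta>"
    and "0 < \<rho>" and deep: "\<And>x. x \<in> S \<Longrightarrow> \<rho> < \<delta> x" and thin: "\<And>x y. x \<in> S \<Longrightarrow> y \<in> S \<Longrightarrow> dist x y < \<rho>"
    and "a \<in> closure S" "b \<in> closure S"
  shows "dist (f a) (f b) < 3 * \<eta>"
proof -
  have approx: "\<exists>x\<in>S. dist (f z) (f x) < \<eta>" if "z \<in> closure S" for z
  proof -
    have "0 < min (\<delta> z) \<rho>" using \<delta>_pos \<open>0 < \<rho>\<close> by simp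
    with that obtain x where "x \<in> S" "dist x z < min (\<delta> z) \<rho>"
      unfolding closure_approachable by blast
    moreover have "\<rho> < \<delta> x" using deep \<open>x \<in> S\<close> .
    ultimately have "dist z x < min (\<delta> z) (\<delta> x)" by (simp add: dist_commute)
    with \<open>x \<in> S\<close> \<delta> show ?thesis by blast
  qed
  obtain x y where "x \<in> S" "y \<in> S" "dist (f a) (f x) < \<eta>" "dist (f b) (f y) < \<eta>"
    using approx \<open>a \<in> closure S\<close> \<open>b \<in> closure S\<close> by blast
  moreover have "dist x y < min (\<delta> x) (\<delta> y)"
    using deep[OF \<open>x \<in> S\<close>] deep[OF \<open>y \<in> S\<close>] thin[OF \<open>x \<in> S\<close> \<open>y \<in> S\<close>] by simp
  then have "dist (f x) (f y) < \<eta>" using \<delta> by blast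
  ultimately show ?thesis
    using dist_triangle[of "f a" "f b" "f x"] dist_triangle[of "f x" "f b" "f y"]
      dist_commute[of "f b" "f y"] by linarith
qed

lemma sigma_discrete_closed_cover_by_thin_closures:
  fixes X :: "nat \<Rightarrow> 'a::metric_space set" and \<rho> :: "nat \<Rightarrow> real"
  assumes "\<And>n. 0 < \<rho> n" and "\<Union>(range X) = UNIV"
  obtains \<A> where "sigma_discrete \<A>" "\<forall>A\<in>\<A>. closed A" "\<Union>\<A> = UNIV"
    "\<forall>A\<in>\<A>. \<exists>n S. A = closure S \<and> S \<subseteq> X n \<and> (\<forall>x\<in>S. \<forall>y\<in>S. dist x y < \<rho> n)"
proof -
  have "\<exists>\<D>::nat \<Rightarrow> 'a set set. (\<forall>m. discrete_family (\<D> m)) \<and> (\<forall>m. \<forall>D\<in>\<D> m. \<exists>c. D \<subseteq> ball c (\<rho> n / 2))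
      \<and> (\<forall>x. \<exists>m. \<exists>D\<in>\<D> m. x \<in> D)" for n
    by (rule sigma_discrete_refinement_of_balls[of "\<rho> n / 2"]) (simp add: assms(1), blast)
  then obtain \<D> :: "nat \<Rightarrow> nat \<Rightarrow> 'a set set" where disc: "\<And>n m. discrete_family (\<D> n m)"
    and fine: "\<And>n m D. D \<in> \<D> n m \<Longrightarrow> \<exists>c. D \<subseteq> ball c (\<rho> n / 2)"
    and cover: "\<And>n x. \<exists>m. \<exists>D\<in>\<D> n m. x \<in> D"
    by metis
  define piece where "piece n D = closure (D \<inter> X n)" for n D
  define \<A> where "\<A> = (\<Union>(n, m). piece n ` \<D> n m)"
  show thesis
  proof (rule that[of \<A>])
    have "piece n ` \<D> n m = closure ` ((\<lambda>D. D \<inter> X n) ` \<D> n m)" for n m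
      unfolding piece_def by (simp add: image_image)
    then have "discrete_family (piece n ` \<D> n m)" for n m
      by (simp add: discrete_family_closure discrete_family_image_subset disc)
    then show "sigma_discrete \<A>"
      unfolding sigma_discrete_iff_countable \<A>_def
      by (intro exI[of _ "range (\<lambda>(n, m). piece n ` \<D> n m)"]) auto
  next
    show "\<forall>A\<in>\<A>. closed A" by (auto simp: \<A>_def piece_def)
  next
    show "\<Union>\<A> = UNIV"
    proof (intro set_eqI iffI)
      fix x :: 'a
      obtain n where "x \<in> X n" using assms(2) by blast
      moreover obtain m D where "D \<in> \<D> n m" "x \<in> D" using cover by blast
      ultimately have "x \<in> piece n D" unfolding piece_def by (blast intro: subsetD[OF closure_subset])
      moreover have "piece n D \<in> \<A>" unfolding \<A>_def using \<open>D \<in> \<D> n m\<close> by auto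
      ultimately show "x \<in> \<Union>\<A>" by blast
    qed simp
  next
    show "\<forall>A\<in>\<A>. \<exists>n S. A = closure S \<and> S \<subseteq> X n \<and> (\<forall>x\<in>S. \<forall>y\<in>S. dist x y < \<rho> n)"
    proof
      fix A assume "A \<in> \<A>"
      then obtain n m D where "D \<in> \<D> n m" and A: "A = closure (D \<inter> X n)"
        by (auto simp: \<A>_def piece_def)
      then obtain c where c: "D \<subseteq> ball c (\<rho> n / 2)" using fine by blast
      have "dist x y < \<rho> n" if "x \<in> D" "y \<in> D" for x y
      proof -
        have "dist x y \<le> dist c x + dist c y" by (rule dist_triangle3)
        also have "\<dots> < \<rho> n / 2 + \<rho> n / 2" using that c by (intro add_strict_mono) auto
        finally show ?thesis by simp
      qed
      with A show "\<exists>n S. A = closure S \<and> S \<subseteq> X n \<and> (\<forall>x\<in>S. \<forall>y\<in>S. dist x y < \<rho> n)" by blast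
    qed
  qed
qed

lemma LTZ_imp_gen_lebesgue_property:
  fixes f :: "'a::metric_space \<Rightarrow> 'b::metric_space"
  assumes "LTZ f"
  shows "gen_lebesgue_property f"
  unfolding gen_lebesgue_property_iff_dist
proof (intro allI impI)
  fix \<epsilon> :: real assume "\<epsilon> > 0"
  then have "\<epsilon>/3 > 0" by simp
  then obtain \<delta> where \<delta>_pos: "\<forall>x. \<delta> x > 0"
    and \<delta>: "\<forall>x y. dist x y < min (\<delta> x) (\<delta> y) \<longrightarrow> dist (f x) (f y) < \<epsilon>/3"
    using assms unfolding LTZ_def by blast
  define X where "X n = {x. inverse (Suc n) < \<delta> x}" for n :: nat
  have "\<Union>(range X) = UNIV"
    using reals_Archimedean \<delta>_pos unfolding X_def by blast
  then obtain \<A> where "sigma_discrete \<A>" "\<forall>A\<in>\<A>. closed A" "\<Union>\<A> = UNIV"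
    and thin: "\<forall>A\<in>\<A>. \<exists>n S. A = closure S \<and> S \<subseteq> X n \<and> (\<forall>x\<in>S. \<forall>y\<in>S. dist x y < inverse (Suc n))"
    by (rule sigma_discrete_closed_cover_by_thin_closures[OF inverse_Suc])
  moreover have "dist (f a) (f b) \<le> \<epsilon>" if "A \<in> \<A>" "a \<in> A" "b \<in> A" for A a b
  proof -
    obtain n S where "A = closure S" "S \<subseteq> X n" and S: "\<forall>x\<in>S. \<forall>y\<in>S. dist x y < inverse (Suc n)"
      using thin \<open>A \<in> \<A>\<close> by blast
    have "inverse (Suc n) < \<delta> x" if "x \<in> S" for x
      using \<open>S \<subseteq> X n\<close> that unfolding X_def by blast
    moreover have "\<And>x y. x \<in> S \<Longrightarrow> y \<in> S \<Longrightarrow> dist x y < inverse (Suc n)" using S by blast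
    moreover have "a \<in> closure S" "b \<in> closure S" using that \<open>A = closure S\<close> by auto
    ultimately have "dist (f a) (f b) < 3 * (\<epsilon>/3)"
      by (rule dist_image_closure_less[OF \<delta>_pos \<delta> inverse_Suc])
    then show ?thesis by simp
  qed
  ultimately show "\<exists>\<A>. sigma_discrete \<A> \<and> (\<forall>A\<in>\<A>. closed A) \<and> \<Union>\<A> = UNIV \<and>
      (\<forall>A\<in>\<A>. \<forall>x\<in>A. \<forall>y\<in>A. dist (f x) (f y) \<le> \<epsilon>)"
    by blast
qed

lemma gen_lebesgue_property_imp_borel1:
  fixes f :: "'a::topological_space \<Rightarrow> 'b::metric_space"
  assumes "gen_lebesgue_property f"
  shows "borel1 f"
  unfolding borel1_def
proof (intro allI impI)
  fix V :: "'b set" assume "open V"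
  have "\<forall>k::nat. \<exists>\<A>. sigma_discrete \<A> \<and> (\<forall>A\<in>\<A>. closed A) \<and> \<Union>\<A> = UNIV \<and>
      (\<forall>A\<in>\<A>. \<forall>x\<in>A. \<forall>y\<in>A. dist (f x) (f y) \<le> inverse (Suc k))"
    using assms unfolding gen_lebesgue_property_iff_dist by simp
  then obtain \<A> where disc: "\<And>k. sigma_discrete (\<A> k)" and closed: "\<And>k. \<forall>A\<in>\<A> k. closed A"
    and cover: "\<And>k. \<Union>(\<A> k) = UNIV"
    and small: "\<And>k. \<forall>A\<in>\<A> k. \<forall>x\<in>A. \<forall>y\<in>A. dist (f x) (f y) \<le> inverse (Suc k)"
    by metis
  have "f -` V = (\<Union>k. \<Union>{A \<in> \<A> k. f ` A \<subseteq> V})"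
  proof (intro equalityI subsetI)
    fix x assume "x \<in> f -` V"
    then have "f x \<in> V" by simp
    with \<open>open V\<close> obtain e where "e > 0" "ball (f x) e \<subseteq> V" by (rule openE)
    obtain k where k: "inverse (Suc k) < e" using reals_Archimedean[OF \<open>e > 0\<close>] by auto
    have "x \<in> \<Union>(\<A> k)" using cover[of k] by simp
    then obtain A where "A \<in> \<A> k" "x \<in> A" by blast
    moreover have "f ` A \<subseteq> ball (f x) e"
      using small[of k] \<open>A \<in> \<A> k\<close> \<open>x \<in> A\<close> k by fastforce
    ultimately show "x \<in> (\<Union>k. \<Union>{A \<in> \<A> k. f ` A \<subseteq> V})"
      using \<open>ball (f x) e \<subseteq> V\<close> by blast
  qed auto
  moreover have "fsigma (\<Union>{A \<in> \<A> k. f ` A \<subseteq> V})" for k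
    using closed[of k] by (intro fsigma_Union_sigma_discrete sigma_discrete_subset[OF disc]) auto
  ultimately show "fsigma (f -` V)"
    by (simp add: fsigma_UN)
qed

lemma borel1_countable_locally_small:
  fixes f :: "'a::metric_space \<Rightarrow> 'b::metric_space"
  assumes "hereditarily_baire TYPE('a)" and "borel1 f"
    and "countable Q" "Q \<noteq> {}" "0 < r"
  obtains q e where "q \<in> Q" "0 < e" "\<forall>z\<in>Q. dist q z < e \<longrightarrow> dist (f q) (f z) < r"
proof -
  define \<S> where "\<S> = insert (f -` (- closure (f ` Q))) ((\<lambda>q. f -` ball (f q) (r/2)) ` Q)"
  have "closure Q \<noteq> {}" using \<open>Q \<noteq> {}\<close> closure_subset by blast
  have "countable \<S>" unfolding \<S>_def using \<open>countable Q\<close> by simp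
  moreover have "\<And>S. S \<in> \<S> \<Longrightarrow> fsigma S"
    using assms(2) unfolding \<S>_def borel1_def by (auto simp: open_Compl)
  moreover have "closure Q \<subseteq> \<Union>\<S>"
  proof
    fix x assume "x \<in> closure Q"
    show "x \<in> \<Union>\<S>"
    proof (cases "f x \<in> closure (f ` Q)")
      case True
      moreover have "r/2 > 0" using \<open>0 < r\<close> by simp
      ultimately obtain q where "q \<in> Q" "dist (f q) (f x) < r/2"
        unfolding closure_approachable by blast
      then show ?thesis unfolding \<S>_def by auto
    qed (auto simp: \<S>_def)
  qed
  ultimately obtain S G where "S \<in> \<S>" "open G" "G \<inter> closure Q \<noteq> {}" and G: "G \<inter> closure Q \<subseteq> S"
    by (rule hereditarily_baire_fsigma_cover[OF assms(1) closed_closure \<open>closure Q \<noteq> {}\<close>])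
  then obtain q0 where "q0 \<in> G" "q0 \<in> Q"
    using open_Int_closure_eq_empty[of G Q] by blast
  have in_S: "z \<in> S" if "z \<in> G" "z \<in> Q" for z
    using G that subsetD[OF closure_subset, of z Q] by blast
  have "f q0 \<in> closure (f ` Q)" using \<open>q0 \<in> Q\<close> by (intro subsetD[OF closure_subset] imageI)
  with in_S[OF \<open>q0 \<in> G\<close> \<open>q0 \<in> Q\<close>] have "S \<noteq> f -` (- closure (f ` Q))" by auto
  with \<open>S \<in> \<S>\<close> obtain q where S: "S = f -` ball (f q) (r/2)" unfolding \<S>_def by blast
  obtain e where "e > 0" "ball q0 e \<subseteq> G" using \<open>open G\<close> \<open>q0 \<in> G\<close> by (rule openE)
  have "dist (f q0) (f z) < r" if "z \<in> Q" "dist q0 z < e" for z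
  proof -
    have "z \<in> G" using that \<open>ball q0 e \<subseteq> G\<close> by auto
    then have "dist (f q) (f q0) < r/2" "dist (f q) (f z) < r/2"
      using in_S S \<open>q0 \<in> G\<close> \<open>q0 \<in> Q\<close> \<open>z \<in> Q\<close> by auto
    then show ?thesis using dist_triangle3[of "f q0" "f z" "f q"] by linarith
  qed
  with \<open>q0 \<in> Q\<close> \<open>e > 0\<close> show thesis using that by blast
qed

lemma countable_invariant_subset:
  fixes p :: "'a \<Rightarrow> nat \<Rightarrow> 'a"
  assumes "x \<in> S" and "\<And>q k. q \<in> S \<Longrightarrow> p q k \<in> S"
  obtains Q where "countable Q" "x \<in> Q" "Q \<subseteq> S" "\<forall>q\<in>Q. \<forall>k. p q k \<in> Q"
proof -
  define walk where "walk ks = foldr (\<lambda>k q. p q k) ks x" for ks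
  have "walk ks \<in> S" for ks
    by (induction ks) (simp_all add: walk_def assms)
  moreover have "walk [] = x" "p (walk ks) k = walk (k # ks)" for ks k
    by (simp_all add: walk_def)
  ultimately show thesis
    by (intro that[of "range walk"]) (auto intro: rangeI)
qed

lemma borel1_imp_fragmentable:
  fixes f :: "'a::metric_space \<Rightarrow> 'b::metric_space"
  assumes "hereditarily_baire TYPE('a)" and "borel1 f"
  shows "fragmentable f"
  unfolding fragmentable_iff_dist
proof (intro allI impI)
  fix \<epsilon> :: real and F :: "'a set" assume "\<epsilon> > 0" and F: "closed F \<and> F \<noteq> {}"
  show "\<exists>U. open U \<and> U \<inter> F \<noteq> {} \<and> (\<forall>x\<in>U \<inter> F. \<forall>y\<in>U \<inter> F. dist (f x) (f y) \<le> \<epsilon>)"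
  proof (rule ccontr)
    assume no_small: "\<not> ?thesis"
    have "\<exists>z\<in>F. dist q z < r \<and> \<epsilon>/2 < dist (f q) (f z)" if "q \<in> F" "r > 0" for q r
    proof -
      have "q \<in> ball q r \<inter> F" using that by simp
      then have "ball q r \<inter> F \<noteq> {}" by blast
      then have "\<not> (\<forall>x\<in>ball q r \<inter> F. \<forall>y\<in>ball q r \<inter> F. dist (f x) (f y) \<le> \<epsilon>)"
        using no_small open_ball by blast
      then obtain x y where "x \<in> F" "dist q x < r" "y \<in> F" "dist q y < r" "\<epsilon> < dist (f x) (f y)"
        by (auto simp: not_le)
      moreover have "dist (f x) (f y) \<le> dist (f q) (f x) + dist (f q) (f y)"
        by (rule dist_triangle3)
      ultimately have "\<epsilon>/2 < dist (f q) (f x) \<or> \<epsilon>/2 < dist (f q) (f y)" by linarith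
      with \<open>x \<in> F\<close> \<open>dist q x < r\<close> \<open>y \<in> F\<close> \<open>dist q y < r\<close> show ?thesis by blast
    qed
    then have "\<forall>q k. \<exists>z. q \<in> F \<longrightarrow> z \<in> F \<and> dist q z < inverse (Suc k) \<and> \<epsilon>/2 < dist (f q) (f z)"
      by (metis inverse_Suc of_nat_Suc)
    then obtain p where p: "\<And>q k. q \<in> F \<Longrightarrow> p q k \<in> F \<and> dist q (p q k) < inverse (Suc k) \<and> \<epsilon>/2 < dist (f q) (f (p q k))"
      by metis
    obtain x0 where "x0 \<in> F" using F by blast
    then obtain Q where "countable Q" "x0 \<in> Q" "Q \<subseteq> F" and Q: "\<forall>q\<in>Q. \<forall>k. p q k \<in> Q"
      by (rule countable_invariant_subset[of x0 F p]) (use p in blast)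
    moreover have "0 < \<epsilon>/2" using \<open>\<epsilon> > 0\<close> by simp
    ultimately obtain q e where "q \<in> Q" "0 < e" and calm: "\<forall>z\<in>Q. dist q z < e \<longrightarrow> dist (f q) (f z) < \<epsilon>/2"
      by (elim borel1_countable_locally_small[OF assms, of Q "\<epsilon>/2"]) blast
    obtain k where "inverse (Suc k) < e" using reals_Archimedean[OF \<open>0 < e\<close>] by auto
    have "q \<in> F" using \<open>q \<in> Q\<close> \<open>Q \<subseteq> F\<close> by blast
    then have "dist q (p q k) < e" "\<epsilon>/2 < dist (f q) (f (p q k))"
      using p[of q k] \<open>inverse (Suc k) < e\<close> by auto
    moreover have "p q k \<in> Q" using Q \<open>q \<in> Q\<close> by blast
    ultimately show False using calm by fastforce
  qed
qed

lemma fragmentable_imp_weakly_separated: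
  fixes f :: "'a::topological_space \<Rightarrow> 'b::metric_space"
  assumes "fragmentable f"
  shows "weakly_separated f"
  unfolding weakly_separated_def
proof (intro allI impI)
  fix \<epsilon> :: real assume "\<epsilon> > 0"
  define good where "good W U \<longleftrightarrow> open U \<and> (\<forall>x\<in>U - W. \<forall>y\<in>U - W. dist (f x) (f y) \<le> \<epsilon>/2)"
    for W U :: "'a set"
  define g where "g W = W \<union> \<Union>{U. good W U}" for W
  have "W \<subseteq> g W" for W unfolding g_def by blast
  moreover have "open (g W)" if "open W" for W using that unfolding g_def good_def by auto
  moreover have "open (\<Union>\<W>)" if "\<forall>W\<in>\<W>. open W" for \<W> :: "'a set set" using that by auto
  moreover have "\<not> g W \<subseteq> W" if "open W" "W \<noteq> UNIV" for W
  proof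
    assume "g W \<subseteq> W"
    have "closed (- W) \<and> - W \<noteq> {}" using that by auto
    then obtain U where "open U" "U \<inter> - W \<noteq> {}" "\<forall>y\<in>U \<inter> - W. \<forall>z\<in>U \<inter> - W. dist (f y) (f z) \<le> \<epsilon>/2"
      using assms \<open>\<epsilon> > 0\<close> unfolding fragmentable_iff_dist by (meson half_gt_zero)
    then have "U \<subseteq> g W" unfolding g_def good_def by (auto simp: Diff_eq)
    with \<open>g W \<subseteq> W\<close> \<open>U \<inter> - W \<noteq> {}\<close> show False by blast
  qed
  ultimately obtain L where L: "\<forall>x. open (L x) \<and> x \<notin> L x \<and> x \<in> g (L x)"
    and same: "\<forall>x y. x \<in> g (L y) \<and> y \<in> g (L x) \<longrightarrow> L x = L y"
    by (rule extensive_exhaustion)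
  then have "\<forall>x. \<exists>U. x \<in> U \<and> good (L x) U" unfolding g_def by blast
  then obtain U where U: "\<And>x. x \<in> U x" "\<And>x. good (L x) (U x)" by metis
  then have U_g: "U x \<subseteq> g (L x)" for x unfolding g_def by auto
  have "dist (f x) (f y) < \<epsilon>" if "x \<in> U y" "y \<in> U x" for x y
  proof -
    have "L x = L y" using same U_g that by blast
    then have "x \<in> U x - L x" "y \<in> U x - L x" using that U(1) L by auto
    then have "dist (f x) (f y) \<le> \<epsilon>/2" using U(2)[of x] unfolding good_def by blast
    with \<open>\<epsilon> > 0\<close> show ?thesis by linarith
  qed
  with U show "\<exists>V. (\<forall>x. open (V x) \<and> x \<in> V x) \<and> (\<forall>x y. x \<in> V y \<and> y \<in> V x \<longrightarrow> dist (f x) (f y) < \<epsilon>)"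
    unfolding good_def by blast
qed

lemma continuous_within_if_small_oscillation:
  fixes f :: "'a::metric_space \<Rightarrow> 'b::metric_space"
  assumes "\<And>e. 0 < e \<Longrightarrow> \<exists>G. open G \<and> x \<in> G \<and> (\<forall>y\<in>G \<inter> F. dist (f y) (f x) < e)"
  shows "continuous (at x within F) f"
  unfolding continuous_within_eps_delta
proof (intro allI impI)
  fix e :: real assume "e > 0"
  then obtain G where "open G" "x \<in> G" and G: "\<forall>y\<in>G \<inter> F. dist (f y) (f x) < e"
    using assms by blast
  then obtain d where "d > 0" "ball x d \<subseteq> G" by (meson openE)
  have "dist (f y) (f x) < e" if "y \<in> F" "dist y x < d" for y
  proof -
    have "y \<in> G" using that \<open>ball x d \<subseteq> G\<close> by (auto simp: dist_commute)
    with G \<open>y \<in> F\<close> show ?thesis by blast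
  qed
  with \<open>d > 0\<close> show "\<exists>d>0. \<forall>y\<in>F. dist y x < d \<longrightarrow> dist (f y) (f x) < e" by blast
qed

lemma fragmentable_imp_PCP:
  fixes f :: "'a::metric_space \<Rightarrow> 'b::metric_space"
  assumes "hereditarily_baire TYPE('a)" and "fragmentable f"
  shows "PCP f"
  unfolding PCP_def
proof (intro allI impI)
  fix F :: "'a set" assume F: "closed F \<and> F \<noteq> {}"
  define W where "W n = \<Union>{G. open G \<and> (\<forall>x\<in>G \<inter> F. \<forall>y\<in>G \<inter> F. dist (f x) (f y) \<le> inverse (Suc n))}"
    for n
  have "\<exists>x\<in>F. \<forall>n. x \<in> W n"
  proof (rule ccontr)
    assume "\<not> ?thesis"
    then have cover: "F \<subseteq> \<Union>(range (\<lambda>n. F - W n))" by blast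
    have "closed (F - W n)" for n
      using F unfolding W_def by (intro closed_Diff open_Union) auto
    then have closed: "\<And>N. N \<in> range (\<lambda>n. F - W n) \<Longrightarrow> closed N" by blast
    have "countable (range (\<lambda>n. F - W n))" by simp
    with F obtain N G where "N \<in> range (\<lambda>n. F - W n)" "open G" "G \<inter> F \<noteq> {}" "G \<inter> F \<subseteq> N"
      using hereditarily_baire_closed_cover[OF assms(1) _ _ _ closed cover] by blast
    then obtain n where "G \<inter> F \<inter> W n = {}" by blast
    have "closed (closure (G \<inter> F)) \<and> closure (G \<inter> F) \<noteq> {}" using \<open>G \<inter> F \<noteq> {}\<close> by simp
    then obtain U where "open U" "U \<inter> closure (G \<inter> F) \<noteq> {}"
      and U: "\<forall>x\<in>U \<inter> closure (G \<inter> F). \<forall>y\<in>U \<inter> closure (G \<inter> F). dist (f x) (f y) \<le> inverse (Suc n)"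
      using assms(2) unfolding fragmentable_iff_dist by (meson inverse_Suc)
    have "U \<inter> G \<subseteq> W n"
      using U \<open>open U\<close> \<open>open G\<close> closure_subset[of "G \<inter> F"] unfolding W_def by blast
    moreover have "U \<inter> (G \<inter> F) \<noteq> {}"
      using \<open>U \<inter> closure (G \<inter> F) \<noteq> {}\<close> open_Int_closure_eq_empty[OF \<open>open U\<close>] by blast
    ultimately show False using \<open>G \<inter> F \<inter> W n = {}\<close> by blast
  qed
  then obtain x where "x \<in> F" and x: "\<And>n. x \<in> W n" by blast
  have "continuous (at x within F) f"
  proof (rule continuous_within_if_small_oscillation)
    fix e :: real assume "0 < e"
    then obtain n where "inverse (Suc n) < e" using reals_Archimedean by blast
    moreover from x[of n] obtain G where "open G" "x \<in> G"
      and "\<forall>y\<in>G \<inter> F. \<forall>z\<in>G \<inter> F. dist (f y) (f z) \<le> inverse (Suc n)"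
      unfolding W_def by blast
    ultimately show "\<exists>G. open G \<and> x \<in> G \<and> (\<forall>y\<in>G \<inter> F. dist (f y) (f x) < e)"
      using \<open>x \<in> F\<close> by force
  qed
  with \<open>x \<in> F\<close> show "\<exists>x\<in>F. continuous (at x within F) f" by blast
qed

lemma PCP_imp_fragmentable:
  fixes f :: "'a::metric_space \<Rightarrow> 'b::metric_space"
  assumes "PCP f"
  shows "fragmentable f"
  unfolding fragmentable_iff_dist
proof (intro allI impI)
  fix \<epsilon> :: real and F :: "'a set" assume "\<epsilon> > 0" and "closed F \<and> F \<noteq> {}"
  then obtain x where "x \<in> F" "continuous (at x within F) f"
    using assms unfolding PCP_def by blast
  then obtain d where "d > 0" and d: "\<forall>y\<in>F. dist y x < d \<longrightarrow> dist (f y) (f x) < \<epsilon>/2"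
    using \<open>\<epsilon> > 0\<close> unfolding continuous_within_eps_delta by (meson half_gt_zero)
  have "dist (f y) (f z) \<le> \<epsilon>" if "y \<in> ball x d \<inter> F" "z \<in> ball x d \<inter> F" for y z
  proof -
    have "dist (f y) (f x) < \<epsilon>/2" "dist (f z) (f x) < \<epsilon>/2"
      using d that by (auto simp: dist_commute)
    then show ?thesis using dist_triangle2[of "f y" "f z" "f x"] by linarith
  qed
  moreover have "x \<in> ball x d \<inter> F" using \<open>x \<in> F\<close> \<open>d > 0\<close> by simp
  then have "ball x d \<inter> F \<noteq> {}" by blast
  ultimately show "\<exists>U. open U \<and> U \<inter> F \<noteq> {} \<and> (\<forall>y\<in>U \<inter> F. \<forall>z\<in>U \<inter> F. dist (f y) (f z) \<le> \<epsilon>)"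
    by (intro exI[of _ "ball x d"] conjI open_ball ballI)
qed

lemma lebesgue_property_imp_gen_lebesgue_property:
  fixes f :: "'a::topological_space \<Rightarrow> 'b::metric_space"
  assumes "lebesgue_property f"
  shows "gen_lebesgue_property f"
  using assms countable_imp_sigma_discrete
  unfolding lebesgue_property_iff_countable_dist gen_lebesgue_property_iff_dist by meson

lemma gen_lebesgue_property_imp_lebesgue_property_separable:
  fixes f :: "'a::metric_space \<Rightarrow> 'b::metric_space"
  assumes "separable_space (euclidean :: 'a topology)" and "gen_lebesgue_property f"
  shows "lebesgue_property f"
  unfolding lebesgue_property_iff_countable_dist
proof (intro allI impI)
  fix \<epsilon> :: real assume "\<epsilon> > 0"
  obtain \<A> where "sigma_discrete \<A>" "\<forall>A\<in>\<A>. closed A" "\<Union>\<A> = UNIV"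
    "\<forall>A\<in>\<A>. \<forall>x\<in>A. \<forall>y\<in>A. dist (f x) (f y) \<le> \<epsilon>"
    by (rule gen_lebesgue_propertyE[OF assms(2) \<open>\<epsilon> > 0\<close>])
  moreover from \<open>sigma_discrete \<A>\<close> obtain \<D> :: "nat \<Rightarrow> 'a set set"
    where "\<And>n. discrete_family (\<D> n)" "\<A> = \<Union>(range \<D>)"
    unfolding sigma_discrete_def by blast
  then have "\<A> - {{}} = (\<Union>n. \<D> n - {{}})" and "countable (\<Union>n. \<D> n - {{}})"
    using countable_discrete_family_if_separable[OF assms(1)] by (blast, simp)
  then have "countable (\<A> - {{}})" by simp
  ultimately show "\<exists>\<A>. countable \<A> \<and> (\<forall>A\<in>\<A>. closed A) \<and> \<Union>\<A> = UNIV \<and>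
      (\<forall>A\<in>\<A>. \<forall>x\<in>A. \<forall>y\<in>A. dist (f x) (f y) \<le> \<epsilon>)"
    by (intro exI[of _ "\<A> - {{}}"]) auto
qed

lemma borel1_imp_lebesgue_property_separable:
  fixes f :: "'a::topological_space \<Rightarrow> 'b::metric_space"
  assumes "separable_space (euclidean :: 'b topology)" and "borel1 f"
  shows "lebesgue_property f"
  unfolding lebesgue_property_iff_countable_dist
proof (intro allI impI)
  fix \<epsilon> :: real assume "\<epsilon> > 0"
  obtain C :: "'b set" where "countable C" and dense: "closure C = UNIV"
    using assms(1) unfolding separable_space_def by auto
  define pieces :: "'b \<Rightarrow> 'a set set"
    where "pieces c = (SOME \<U>. countable \<U> \<and> (\<forall>U\<in>\<U>. closed U) \<and> \<Union>\<U> = f -` ball c (\<epsilon>/2))" for c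
  have pieces: "countable (pieces c) \<and> (\<forall>U\<in>pieces c. closed U) \<and> \<Union>(pieces c) = f -` ball c (\<epsilon>/2)" for c
  proof -
    have "(countable union_of closed) (f -` ball c (\<epsilon>/2))"
      using assms(2) unfolding borel1_def fsigma_iff_countable_union_of by simp
    then have "\<exists>\<U>. countable \<U> \<and> (\<forall>U\<in>\<U>. closed U) \<and> \<Union>\<U> = f -` ball c (\<epsilon>/2)"
      unfolding union_of_def by (simp add: subset_eq)
    then show ?thesis unfolding pieces_def by (rule someI_ex)
  qed
  define \<A> where "\<A> = (\<Union>c\<in>C. pieces c)"
  have "\<Union>\<A> = UNIV"
  proof (intro set_eqI iffI)
    fix x
    have "\<epsilon>/2 > 0" using \<open>\<epsilon> > 0\<close> by simp
    with dense obtain c where "c \<in> C" "dist c (f x) < \<epsilon>/2"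
      using closure_approachable[of "f x" C] by blast
    then have "x \<in> \<Union>(pieces c)" using pieces[of c] by simp
    with \<open>c \<in> C\<close> show "x \<in> \<Union>\<A>" unfolding \<A>_def by blast
  qed simp
  moreover have "dist (f x) (f y) \<le> \<epsilon>" if A: "A \<in> \<A>" and xy: "x \<in> A" "y \<in> A" for A x y
  proof -
    obtain c where "A \<in> pieces c" using A unfolding \<A>_def by blast
    then have "dist c (f x) < \<epsilon>/2" "dist c (f y) < \<epsilon>/2" using pieces[of c] xy by auto
    then show ?thesis using dist_triangle3[of "f x" "f y" c] by linarith
  qed
  ultimately show "\<exists>\<A>. countable \<A> \<and> (\<forall>A\<in>\<A>. closed A) \<and> \<Union>\<A> = UNIV \<and>
      (\<forall>A\<in>\<A>. \<forall>x\<in>A. \<forall>y\<in>A. dist (f x) (f y) \<le> \<epsilon>)"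
    using \<open>countable C\<close> pieces unfolding \<A>_def by (intro exI[of _ \<A>]) (auto simp: \<A>_def)
qed

theorem corollary2p6:
  fixes f :: "'a::metric_space \<Rightarrow> 'b::metric_space"
  assumes "hereditarily_baire TYPE('a)"
  shows "(gen_lebesgue_property f \<longleftrightarrow> weakly_separated f)
       \<and> (gen_lebesgue_property f \<longleftrightarrow> LTZ f)
       \<and> (gen_lebesgue_property f \<longleftrightarrow> PCP f)
       \<and> (gen_lebesgue_property f \<longleftrightarrow> borel1 f)
       \<and> (gen_lebesgue_property f \<longleftrightarrow> fragmentable f)
       \<and> (separable_space (euclidean :: 'a topology) \<or> separable_space (euclidean :: 'b topology)
            \<longrightarrow> (gen_lebesgue_property f \<longleftrightarrow> lebesgue_property f))"
proof -
  have WS: "gen_lebesgue_property f \<longleftrightarrow> weakly_separated f"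
    using gen_lebesgue_property_imp_weakly_separated weakly_separated_imp_LTZ
      LTZ_imp_gen_lebesgue_property by blast
  have LTZ: "gen_lebesgue_property f \<longleftrightarrow> LTZ f"
    using WS weakly_separated_imp_LTZ LTZ_imp_gen_lebesgue_property by blast
  have B1: "gen_lebesgue_property f \<longleftrightarrow> borel1 f"
    using WS gen_lebesgue_property_imp_borel1 borel1_imp_fragmentable[OF assms]
      fragmentable_imp_weakly_separated by blast
  have FR: "gen_lebesgue_property f \<longleftrightarrow> fragmentable f"
    using WS B1 borel1_imp_fragmentable[OF assms] fragmentable_imp_weakly_separated by blast
  have PCP: "gen_lebesgue_property f \<longleftrightarrow> PCP f"
    using FR fragmentable_imp_PCP[OF assms] PCP_imp_fragmentable by blast
  have "gen_lebesgue_property f \<longleftrightarrow> lebesgue_property f"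
    if "separable_space (euclidean :: 'a topology) \<or> separable_space (euclidean :: 'b topology)"
    using that B1 lebesgue_property_imp_gen_lebesgue_property
      gen_lebesgue_property_imp_lebesgue_property_separable borel1_imp_lebesgue_property_separable
    by blast
  with WS LTZ PCP B1 FR show ?thesis by blast
qed

end
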